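(* Let $m,n$ be nonnegative integers with $m>n$, let $\varepsilon\in\{+1,-1\}$, and let $z\in\mathbb{C}\setminus(-\infty,1]$. Then \[ \frac{\mathrm{d}^{m}}{\mathrm{d}z^{m}}\bigl[P_{n}(z)\ln(z+\varepsilon)\bigr] =(-\varepsilon)^{n}(-1)^{m+1}(n+m)!\,(m-n-1)!\,(z^{2}-1)^{-m/2}P_{n}^{-m}(\varepsilon z). \]
   Context: $P_n(z)$ denotes the Legendre polynomial of degree $n$. The complex plane is cut along the real axis from $-\infty$ to $+1$; for $z\in\mathbb{C}\setminus(-\infty,1]$, $\ln(z\pm1)$ and all fractional powers $(z\pm1)^{s}$ denote principal branches, and $(z^{2}-1)^{-m/2}:=(z-1)^{-m/2}(z+1)^{-m/2}$. The associated Legendre function of the first kind of negative integer order is $P_{n}^{-m}(\zeta)=\frac{1}{m!}\left(\frac{\zeta-1}{\zeta+1}\right)^{m/2}{}_{2}F_{1}\!\left(-n,n+1;1+m;\frac{1-\zeta}{2}\right)$, where for $\zeta=z$ one takes $\left(\frac{z-1}{z+1}\right)^{m/2}:=(z-1)^{m/2}(z+1)^{-m/2}$, and for $\zeta=-z$ one takes $\left(\frac{-z-1}{-z+1}\right)^{m/2}:=(z+1)^{m/2}(z-1)^{-m/2}$ (consistent with $-z\mp1=\mathrm{e}^{\mp\mathrm{i}\pi}(z\pm1)$ on the cut plane). The case $\varepsilon=+1$ concerns $\ln(z+1)$ and the case $\varepsilon=-1$ concerns $\ln(z-1)$. *)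

theory Defs
  imports "HOL-Analysis.Analysis"
begin

definition hyp2F1 :: "complex \<Rightarrow> complex \<Rightarrow> complex \<Rightarrow> complex \<Rightarrow> complex" where
  "hyp2F1 a b c x = (\<Sum>k. pochhammer a k * pochhammer b k / (pochhammer c k * fact k) * x ^ k)"

text \<open>Legendre polynomial of degree n (explicit standard formula,
  equal to 2F1(-n,n+1;1;(1-z)/2)).\<close>
definition legendreP :: "nat \<Rightarrow> complex \<Rightarrow> complex" where
  "legendreP n z = (\<Sum>k\<le>n. of_nat (n choose k) * of_nat ((n + k) choose k) * ((z - 1) / 2) ^ k)"

text \<open>P_n^{-m}(eps*z) for z in the cut plane, with the branch conventions of the paper:
  eps = 1:  ((z-1)/(z+1))^{m/2} := (z-1)^{m/2} (z+1)^{-m/2};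
  eps = -1: ((-z-1)/(-z+1))^{m/2} := (z+1)^{m/2} (z-1)^{-m/2}.\<close>
definition assocP_neg :: "nat \<Rightarrow> nat \<Rightarrow> int \<Rightarrow> complex \<Rightarrow> complex" where
  "assocP_neg n m eps z =
     (1 / fact m) *
     (if eps = 1 then (z - 1) powr (of_nat m / 2) * (z + 1) powr (- (of_nat m / 2))
      else (z + 1) powr (of_nat m / 2) * (z - 1) powr (- (of_nat m / 2))) *
     hyp2F1 (- of_nat n) (of_nat n + 1) (1 + of_nat m) ((1 - of_int eps * z) / 2)"

end

theory Submission
  imports Defs "HOL-Complex_Analysis.Complex_Analysis" "HOL-Computational_Algebra.Formal_Power_Series"
begin

(* With u = z + \<epsilon>, the Legendre polynomial expands as
   P_n(u - \<epsilon>) = \<Sum>_k (-\<epsilon>)^(n+k) C(n,k) C(n+k,k) (u/2)^k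
   (for \<epsilon> = -1 this is the defining formula, for \<epsilon> = 1 it follows from the parity
   P_n(-z) = (-1)^n P_n(z)).  Since k \<le> n < m, the m-th derivative of u^k ln u is
   (-1)^(m-k-1) k! (m-k-1)! u^(k-m): already the (k+1)-st derivative is k!/u.  Hence the left-hand
   side is (-\<epsilon>)^n (-1)^(m+1) u^(-m) \<Sum>_k C(n,k) C(n+k,k) k! (m-k-1)! (\<epsilon>u/2)^k, and a
   Chu-Vandermonde summation identifies this sum with (n+m)! (m-n-1)!/m! 2F1(-n,n+1;1+m;(1-\<epsilon>z)/2).
   Finally the branch factors of P_n^(-m)(\<epsilon>z) combine with (z^2-1)^(-m/2) into exactly u^(-m). *)

definition legendre_coeff :: "nat \<Rightarrow> nat \<Rightarrow> 'a::semiring_1" where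
  "legendre_coeff n k = of_nat (n choose k) * of_nat ((n + k) choose k)"

lemma sum_atMost_nested_swap:
  fixes g :: "nat \<Rightarrow> nat \<Rightarrow> 'a::comm_monoid_add"
  shows "(\<Sum>k\<le>n. \<Sum>j\<le>k. g k j) = (\<Sum>j\<le>n. \<Sum>k=j..n. g k j)"
  by (induction n) (simp_all add: sum.distrib atLeastAtMostSuc_conv add_ac)

lemma pochhammer_of_nat_nonzero: "0 < p \<Longrightarrow> pochhammer (of_nat p :: 'a::field_char_0) r \<noteq> 0"
  by (metis of_nat_0_less_iff of_nat_eq_0_iff pochhammer_of_nat pochhammer_pos less_numeral_extra(3))

lemma binomial_eq_pochhammer_minus:
  "(of_nat (n choose k) :: 'a::field_char_0) = (-1) ^ k * pochhammer (- of_nat n) k / fact k"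
  by (simp add: binomial_gbinomial gbinomial_pochhammer)

lemma binomial_add_eq_pochhammer:
  "(of_nat ((n + k) choose k) :: 'a::field_char_0) = pochhammer (of_nat n + 1) k / fact k"
  by (simp add: binomial_gbinomial gbinomial_pochhammer')

lemma legendre_coeff_pochhammer:
  "(legendre_coeff n k :: 'a::field_char_0) =
    (-1) ^ k * (pochhammer (- of_nat n) k * pochhammer (of_nat n + 1) k / (pochhammer 1 k * fact k))"
  by (simp add: legendre_coeff_def binomial_eq_pochhammer_minus[of n k] binomial_add_eq_pochhammer[of n k]
      pochhammer_fact[symmetric])

lemma fact_add_eq_fact_mult_pochhammer:
  "(fact (q + r) :: 'a::{semiring_char_0,comm_semiring_1}) = fact q * pochhammer (of_nat q + 1) r"
  by (simp add: pochhammer_fact pochhammer_product' add.commute)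

(* Weighted by binomial(k, j), the tail k \<ge> j of a terminating hypergeometric sum is again a
   Chu-Vandermonde sum, after the shift k = j + i. *)
lemma Vandermonde_pochhammer_binomial:
  fixes b :: "'a::field_char_0"
  assumes jn: "j \<le> n" and p: "0 < p"
  shows "(\<Sum>k=j..n. pochhammer (- of_nat n) k * pochhammer b k / (pochhammer (of_nat p) k * fact k) *
      of_nat (k choose j)) =
    pochhammer (- of_nat n) j * pochhammer b j / (pochhammer (of_nat p) j * fact j) *
      (pochhammer (of_nat p - b) (n - j) / pochhammer (of_nat (p + j)) (n - j))"
proof -
  define X where "X = pochhammer (- of_nat n) j * pochhammer b j / (pochhammer (of_nat p) j * fact j :: 'a)"
  have shifted_term: "pochhammer (- of_nat n) (j + i) * pochhammer b (j + i) / (pochhammer (of_nat p) (j + i) * fact (j + i)) *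
      of_nat ((j + i) choose j) =
    X * (pochhammer (b + of_nat j) i * pochhammer (- of_nat (n - j)) i / (fact i * pochhammer (of_nat (p + j)) i))"
    for i
  proof -
    have shift: "- of_nat n + of_nat j = (- of_nat (n - j) :: 'a)"
      using jn by (simp add: of_nat_diff)
    have fact_split: "(fact (j + i) :: 'a) = fact j * fact i * of_nat ((j + i) choose j)"
      using binomial_fact_lemma[of j "j + i"] by (metis add_diff_cancel_left' le_add1 of_nat_fact of_nat_mult)
    have "pochhammer (of_nat p) j \<noteq> (0::'a)" "pochhammer (of_nat (p + j)) i \<noteq> (0::'a)"
      using p pochhammer_of_nat_nonzero[of "p + j"] by (simp_all add: pochhammer_of_nat_nonzero)
    then show ?thesis
      unfolding X_def pochhammer_product' shift fact_split by (simp add: field_simps)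
  qed
  have "\<forall>i\<in>{0..<n-j}. (of_nat (p + j) :: 'a) \<noteq> - of_nat i"
  proof
    fix i
    have "(of_nat (p + j + i) :: 'a) \<noteq> 0" using p by (simp only: of_nat_eq_0_iff)
    then show "(of_nat (p + j) :: 'a) \<noteq> - of_nat i" by (metis eq_neg_iff_add_eq_0 of_nat_add)
  qed
  note Vandermonde = Vandermonde_pochhammer[OF this, of "b + of_nat j"]
  have "(\<Sum>k=j..n. pochhammer (- of_nat n) k * pochhammer b k / (pochhammer (of_nat p) k * fact k) *
      of_nat (k choose j)) =
    (\<Sum>i=0..n-j. X * (pochhammer (b + of_nat j) i * pochhammer (- of_nat (n - j)) i /
      (fact i * pochhammer (of_nat (p + j)) i)))"
    by (subst sum.atLeastAtMost_shift_0[OF jn]) (rule sum.cong, simp_all only: o_apply shifted_term)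
  also have "\<dots> = X * (\<Sum>i=0..n-j. pochhammer (b + of_nat j) i * pochhammer (- of_nat (n - j)) i /
      (fact i * pochhammer (of_nat (p + j)) i))"
    by (simp only: sum_distrib_left)
  also have "\<dots> = X * (pochhammer (of_nat (p + j) - (b + of_nat j)) (n - j) / pochhammer (of_nat (p + j)) (n - j))"
    using Vandermonde by simp
  finally show ?thesis unfolding X_def by simp
qed

lemma sum_legendre_coeff_binomial:
  assumes jn: "j \<le> n"
  shows "(\<Sum>k=j..n. (-1) ^ k * legendre_coeff n k * of_nat (k choose j)) =
    (-1) ^ n * (legendre_coeff n j :: 'a::field_char_0)"
proof -
  define h :: "nat \<Rightarrow> 'a" where
    "h k = pochhammer (- of_nat n) k * pochhammer (of_nat n + 1) k / (pochhammer 1 k * fact k)" for k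
  have sign_h: "(-1) ^ k * legendre_coeff n k = h k" for k
    unfolding h_def legendre_coeff_pochhammer by (simp flip: power_add add: power_even_eq)
  have "pochhammer (- of_nat n) (n - j) = (-1) ^ (n - j) * pochhammer (of_nat j + 1 :: 'a) (n - j)"
    using pochhammer_minus[of "of_nat n :: 'a" "n - j"] jn by (simp add: of_nat_diff)
  moreover have "pochhammer (of_nat j + 1 :: 'a) (n - j) \<noteq> 0"
    using pochhammer_of_nat_nonzero[of "j + 1" "n - j"] by (simp add: add.commute)
  ultimately have ratio: "pochhammer (1 - (of_nat n + 1)) (n - j) / pochhammer (of_nat (1 + j)) (n - j) =
      ((-1) ^ (n - j) :: 'a)"
    by (simp add: add.commute)
  have "(\<Sum>k=j..n. h k * of_nat (k choose j)) =
      h j * (pochhammer (1 - (of_nat n + 1)) (n - j) / pochhammer (of_nat (1 + j)) (n - j))"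
    unfolding h_def using Vandermonde_pochhammer_binomial[OF jn, of 1 "of_nat n + 1"] by simp
  also have "\<dots> = (-1) ^ (n - j) * h j"
    unfolding ratio by simp
  also have "\<dots> = (-1) ^ n * legendre_coeff n j"
    using jn by (simp add: sign_h[symmetric] power_add[symmetric])
  finally show ?thesis
    by (simp add: sign_h mult.assoc)
qed

lemma legendreP_eq_sum_legendre_coeff:
  "legendreP n z = (\<Sum>k\<le>n. legendre_coeff n k * ((z - 1) / 2) ^ k)"
  by (simp add: legendreP_def legendre_coeff_def)

lemma legendreP_minus: "legendreP n (- z) = (-1) ^ n * legendreP n z"
proof -
  define y where "y = (z - 1) / 2"
  have reflect: "(- z - 1) / 2 = - (y + 1)"
    unfolding y_def by (simp add: field_simps)
  have "legendreP n (- z) = (\<Sum>k\<le>n. (-1) ^ k * legendre_coeff n k * (y + 1) ^ k)"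
    unfolding legendreP_eq_sum_legendre_coeff reflect power_minus[of "y + 1"] by (simp add: mult_ac)
  also have "\<dots> = (\<Sum>k\<le>n. \<Sum>j\<le>k. (-1) ^ k * legendre_coeff n k * of_nat (k choose j) * y ^ j)"
    by (simp add: binomial_ring[of y 1] sum_distrib_left mult.assoc)
  also have "\<dots> = (\<Sum>j\<le>n. (\<Sum>k=j..n. (-1) ^ k * legendre_coeff n k * of_nat (k choose j)) * y ^ j)"
    by (simp only: sum_atMost_nested_swap sum_distrib_right)
  also have "\<dots> = (\<Sum>j\<le>n. (-1) ^ n * legendre_coeff n j * y ^ j)"
    by (rule sum.cong) (simp_all add: sum_legendre_coeff_binomial)
  also have "\<dots> = (-1) ^ n * legendreP n z"
    by (simp add: legendreP_eq_sum_legendre_coeff y_def sum_distrib_left mult.assoc)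
  finally show ?thesis .
qed

lemma legendreP_shift_expansion:
  fixes c :: complex
  assumes "c = 1 \<or> c = -1"
  shows "legendreP n (v - c) = (\<Sum>k\<le>n. (-c) ^ (n + k) * legendre_coeff n k / 2 ^ k * v ^ k)"
  using assms
proof
  assume c: "c = 1"
  have "legendreP n (v - c) = (-1) ^ n * legendreP n (1 - v)"
    using legendreP_minus[of n "1 - v"] c by simp
  then show ?thesis
    by (simp add: c legendreP_eq_sum_legendre_coeff sum_distrib_left power_add power_divide
        power_minus[of "v / 2"] mult_ac)
next
  assume "c = -1"
  then show ?thesis
    by (simp add: legendreP_eq_sum_legendre_coeff power_divide mult_ac)
qed

lemma sum_hypergeometric_coeff_binomial:
  assumes kn: "k \<le> n" and nm: "n < m"
  shows "fact (n + m) * fact (m - n - 1) / fact m *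
      (\<Sum>j=k..n. pochhammer (- of_nat n) j * pochhammer (of_nat n + 1) j /
        (pochhammer (of_nat (m + 1)) j * fact j) * of_nat (j choose k)) =
    (-1) ^ k * legendre_coeff n k * fact k * (fact (m - k - 1) :: 'a::field_char_0)"
proof -
  have sum_eq: "(\<Sum>j=k..n. pochhammer (- of_nat n) j * pochhammer (of_nat n + 1) j /
        (pochhammer (of_nat (m + 1)) j * fact j) * of_nat (j choose k)) =
      pochhammer (- of_nat n) k * pochhammer (of_nat n + 1) k / (pochhammer (of_nat (m + 1)) k * fact k) *
      (pochhammer (of_nat (m + 1) - (of_nat n + 1)) (n - k) / pochhammer (of_nat (m + 1 + k)) (n - k) :: 'a)"
    by (rule Vandermonde_pochhammer_binomial[OF kn]) simp
  have upper: "of_nat (m + 1) - (of_nat n + 1) = (of_nat (m - n - 1) + 1 :: 'a)"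
    using nm by (simp add: of_nat_diff)
  have fact_lower: "(fact (m - k - 1) :: 'a) = fact (m - n - 1) * pochhammer (of_nat (m - n - 1) + 1) (n - k)"
  proof -
    have "m - k - 1 = (m - n - 1) + (n - k)" using kn nm by arith
    then show ?thesis by (simp only: fact_add_eq_fact_mult_pochhammer)
  qed
  have fact_upper: "(fact (n + m) :: 'a) =
      fact m * (pochhammer (of_nat (m + 1)) k * pochhammer (of_nat (m + 1 + k)) (n - k))"
  proof -
    have "(fact (n + m) :: 'a) = fact m * pochhammer (of_nat m + 1) n"
      using fact_add_eq_fact_mult_pochhammer[of m n] by (simp add: add.commute)
    also have "pochhammer (of_nat m + 1) n =
        pochhammer (of_nat (m + 1)) k * (pochhammer (of_nat (m + 1 + k)) (n - k) :: 'a)"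
      using pochhammer_product[OF kn, of "of_nat (m + 1) :: 'a"] by (simp add: add_ac)
    finally show ?thesis .
  qed
  have "pochhammer (of_nat (m + 1)) k \<noteq> (0::'a)" "pochhammer (of_nat (m + 1 + k)) (n - k) \<noteq> (0::'a)"
    by (rule pochhammer_of_nat_nonzero, simp)+
  moreover have "(-1) ^ k * legendre_coeff n k * pochhammer 1 k =
      (pochhammer (- of_nat n) k * pochhammer (of_nat n + 1) k / fact k :: 'a)"
    by (simp add: legendre_coeff_pochhammer power_mult_distrib[symmetric] pochhammer_fact[symmetric])
  ultimately show ?thesis
    unfolding sum_eq upper fact_lower fact_upper
    by (simp add: field_simps pochhammer_fact[symmetric])
qed

lemma hyp2F1_minus_of_nat:
  "hyp2F1 (- of_nat n) b c t =
    (\<Sum>j\<le>n. pochhammer (- of_nat n) j * pochhammer b j / (pochhammer c j * fact j) * t ^ j)"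
  unfolding hyp2F1_def by (rule suminf_finite) (auto simp: pochhammer_of_nat_eq_0_iff)

lemma sum_legendre_coeff_eq_hyp2F1:
  assumes nm: "n < m"
  shows "(\<Sum>k\<le>n. legendre_coeff n k * fact k * fact (m - k - 1) * x ^ k) =
    fact (n + m) * fact (m - n - 1) / fact m * hyp2F1 (- of_nat n) (of_nat n + 1) (1 + of_nat m) (1 - x)"
proof -
  define K :: complex where "K = fact (n + m) * fact (m - n - 1) / fact m"
  define h :: "nat \<Rightarrow> complex" where
    "h j = pochhammer (- of_nat n) j * pochhammer (of_nat n + 1) j / (pochhammer (of_nat (m + 1)) j * fact j)"
    for j
  have "K * hyp2F1 (- of_nat n) (of_nat n + 1) (1 + of_nat m) (1 - x) = K * (\<Sum>j\<le>n. h j * (1 - x) ^ j)"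
    unfolding hyp2F1_minus_of_nat h_def by (simp add: add.commute)
  also have "\<dots> = K * (\<Sum>j\<le>n. \<Sum>k\<le>j. h j * of_nat (j choose k) * (- x) ^ k)"
    using binomial_ring[of "- x" 1] by (simp add: sum_distrib_left mult.assoc)
  also have "\<dots> = (\<Sum>k\<le>n. K * (\<Sum>j=k..n. h j * of_nat (j choose k)) * (- x) ^ k)"
    by (simp add: sum_atMost_nested_swap sum_distrib_left sum_distrib_right mult.assoc)
  also have "\<dots> = (\<Sum>k\<le>n. legendre_coeff n k * fact k * fact (m - k - 1) * x ^ k)"
  proof (rule sum.cong)
    fix k assume "k \<in> {..n}"
    then have coeff: "K * (\<Sum>j=k..n. h j * of_nat (j choose k)) =
        (-1) ^ k * legendre_coeff n k * fact k * fact (m - k - 1)"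
      unfolding K_def h_def using sum_hypergeometric_coeff_binomial[of k n m] nm by simp
    have "K * (\<Sum>j=k..n. h j * of_nat (j choose k)) * (- x) ^ k =
        ((-1) ^ k * (-1) ^ k) * (legendre_coeff n k * fact k * fact (m - k - 1) * x ^ k)"
      unfolding power_minus[of x] coeff by (simp only: mult_ac)
    then show "K * (\<Sum>j=k..n. h j * of_nat (j choose k)) * (- x) ^ k =
        legendre_coeff n k * fact k * fact (m - k - 1) * x ^ k"
      by (simp flip: power_mult_distrib)
  qed simp
  finally show ?thesis unfolding K_def ..
qed

lemma higher_deriv_shift: "(deriv ^^ n) (\<lambda>w. f (w + c)) z = (deriv ^^ n) f (z + c)"
proof -
  have "(\<lambda>x. f (z + x + c)) = (\<lambda>x. f (z + c + x))" by (simp add: add_ac)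
  then show ?thesis
    using higher_deriv_shift_0[of n f "z + c"] higher_deriv_shift_0[of n "\<lambda>w. f (w + c)" z]
    by (simp add: o_def)
qed

lemma higher_deriv_sum:
  fixes f :: "'i \<Rightarrow> complex \<Rightarrow> complex"
  assumes "finite I" "\<And>i. i \<in> I \<Longrightarrow> f i holomorphic_on S" "open S" "z \<in> S"
  shows "(deriv ^^ j) (\<lambda>w. \<Sum>i\<in>I. f i w) z = (\<Sum>i\<in>I. (deriv ^^ j) (f i) z)"
  using assms(1,2)
proof (induction I rule: finite_induct)
  case (insert a I)
  have "(deriv ^^ j) (\<lambda>w. f a w + (\<Sum>i\<in>I. f i w)) z = (deriv ^^ j) (f a) z + (deriv ^^ j) (\<lambda>w. \<Sum>i\<in>I. f i w) z"
    using insert.prems assms(3,4) by (intro higher_deriv_add holomorphic_on_sum) auto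
  with insert show ?case by simp
qed simp

lemma higher_deriv_inverse:
  fixes u :: complex
  assumes "u \<noteq> 0"
  shows "(deriv ^^ j) inverse u = (-1) ^ j * fact j * inverse u ^ Suc j"
  using assms
proof (induction j arbitrary: u)
  case (Suc j)
  have "eventually (\<lambda>v. v \<noteq> 0) (nhds u)"
    using Suc.prems by (intro t1_space_nhds)
  then have "eventually (\<lambda>v. (deriv ^^ j) inverse v = (-1) ^ j * fact j * inverse v ^ Suc j) (nhds u)"
    by eventually_elim (rule Suc.IH)
  then have "(deriv ^^ Suc j) inverse u = deriv (\<lambda>v. (-1) ^ j * fact j * inverse v ^ Suc j) u"
    by (simp add: deriv_cong_ev)
  also have "\<dots> = (-1) ^ Suc j * fact (Suc j) * inverse u ^ Suc (Suc j)"
    using Suc.prems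
    by (intro DERIV_imp_deriv)
      (auto intro!: derivative_eq_intros simp: field_simps power_Suc2 simp del: power_Suc; cases j; simp)
  finally show ?case .
qed simp

lemma open_slit_plane: "open (- \<real>\<^sub>\<le>\<^sub>0 :: complex set)"
  using closed_nonpos_Reals_complex by blast

lemma holomorphic_power_mult_Ln: "(\<lambda>v. v ^ k * Ln v) holomorphic_on - \<real>\<^sub>\<le>\<^sub>0"
  by (intro holomorphic_intros holomorphic_on_Ln) auto

lemma higher_deriv_power_mult_Ln_Suc:
  assumes "u \<notin> \<real>\<^sub>\<le>\<^sub>0"
  shows "(deriv ^^ Suc k) (\<lambda>v. v ^ k * Ln v) u = fact k * inverse u"
  using assms
proof (induction k arbitrary: u)
  case 0
  then show ?case by (simp add: DERIV_imp_deriv has_field_derivative_Ln)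
next
  case (Suc k)
  define G where "G = (\<lambda>v. of_nat (Suc k) * (v ^ k * Ln v) + v ^ k)"
  have "deriv (\<lambda>v. v ^ Suc k * Ln v) v = G v" if "v \<in> - \<real>\<^sub>\<le>\<^sub>0" for v
    using that unfolding G_def
    by (intro DERIV_imp_deriv) (auto intro!: derivative_eq_intros simp: field_simps; cases k; simp)
  then have "(deriv ^^ Suc k) (deriv (\<lambda>v. v ^ Suc k * Ln v)) u = (deriv ^^ Suc k) G u"
    using Suc.prems
    by (intro higher_deriv_transform_within_open[OF holomorphic_deriv[OF holomorphic_power_mult_Ln
        open_slit_plane] _ open_slit_plane]) (auto simp: G_def intro!: holomorphic_intros holomorphic_power_mult_Ln)
  also have "\<dots> = (deriv ^^ Suc k) (\<lambda>v. of_nat (Suc k) * (v ^ k * Ln v)) u + (deriv ^^ Suc k) (\<lambda>v. v ^ k) u"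
    unfolding G_def using Suc.prems
    by (intro higher_deriv_add[where S = "- \<real>\<^sub>\<le>\<^sub>0"] holomorphic_intros holomorphic_power_mult_Ln
        open_slit_plane) auto
  also have "(deriv ^^ Suc k) (\<lambda>v. of_nat (Suc k) * (v ^ k * Ln v)) u
      = of_nat (Suc k) * (deriv ^^ Suc k) (\<lambda>v. v ^ k * Ln v) u"
    using Suc.prems by (intro higher_deriv_cmult[where A = "- \<real>\<^sub>\<le>\<^sub>0"] holomorphic_power_mult_Ln
        open_slit_plane) auto
  also have "(deriv ^^ Suc k) (\<lambda>v. v ^ k) u = 0"
    using higher_deriv_power[of "Suc k" 0 k u] by (simp add: pochhammer_0_left)
  finally show ?case
    using Suc by (simp add: funpow_Suc_right del: funpow.simps)
qed

lemma higher_deriv_power_mult_Ln: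
  assumes "k < m" "u \<notin> \<real>\<^sub>\<le>\<^sub>0"
  shows "(deriv ^^ m) (\<lambda>v. v ^ k * Ln v) u =
    (-1) ^ (m - k - 1) * fact k * fact (m - k - 1) * inverse u ^ (m - k)"
proof -
  define j where "j = m - k - 1"
  have m: "m = j + Suc k" and mk: "m - k = Suc j" using assms(1) unfolding j_def by simp_all
  have u0: "u \<noteq> 0" using assms(2) by auto
  have "(deriv ^^ m) (\<lambda>v. v ^ k * Ln v) u = (deriv ^^ j) ((deriv ^^ Suc k) (\<lambda>v. v ^ k * Ln v)) u"
    by (simp only: m funpow_add o_apply)
  also have "\<dots> = (deriv ^^ j) (\<lambda>v. fact k * inverse v) u"
    using assms(2) higher_deriv_power_mult_Ln_Suc
    by (intro higher_deriv_transform_within_open[OF holomorphic_higher_deriv[OF holomorphic_power_mult_Ln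
        open_slit_plane] _ open_slit_plane]) (auto intro!: holomorphic_intros)
  also have "\<dots> = fact k * (deriv ^^ j) inverse u"
    using u0 by (intro higher_deriv_cmult[where A = "- {0}"]) (auto intro!: holomorphic_intros)
  finally show ?thesis
    by (simp add: higher_deriv_inverse[OF u0] mk j_def[symmetric] mult_ac)
qed

lemma higher_deriv_poly_mult_Ln:
  fixes b :: "nat \<Rightarrow> complex"
  assumes "n < m" "u \<notin> \<real>\<^sub>\<le>\<^sub>0"
  shows "(deriv ^^ m) (\<lambda>v. (\<Sum>k\<le>n. b k * v ^ k) * Ln v) u =
    (\<Sum>k\<le>n. b k * ((-1) ^ (m - k - 1) * fact k * fact (m - k - 1) * inverse u ^ (m - k)))"
proof -
  have "(\<lambda>v. (\<Sum>k\<le>n. b k * v ^ k) * Ln v) = (\<lambda>v. \<Sum>k\<le>n. b k * (v ^ k * Ln v))"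
    by (simp add: sum_distrib_right mult.assoc)
  then have "(deriv ^^ m) (\<lambda>v. (\<Sum>k\<le>n. b k * v ^ k) * Ln v) u = (\<Sum>k\<le>n. b k * (deriv ^^ m) (\<lambda>v. v ^ k * Ln v) u)"
    using assms(2)
    by (simp add: higher_deriv_sum[OF _ _ open_slit_plane] higher_deriv_cmult[OF _ _ open_slit_plane]
        holomorphic_power_mult_Ln holomorphic_intros)
  then show ?thesis
    using assms by (simp add: higher_deriv_power_mult_Ln)
qed

lemma higher_deriv_legendreP_mult_Ln:
  fixes c u :: complex
  assumes nm: "n < m" and c: "c = 1 \<or> c = -1" and u: "u \<notin> \<real>\<^sub>\<le>\<^sub>0"
  shows "(deriv ^^ m) (\<lambda>v. legendreP n (v - c) * Ln v) u =
    (-c) ^ n * (-1) ^ (m + 1) * inverse u ^ m *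
    (\<Sum>k\<le>n. legendre_coeff n k * fact k * fact (m - k - 1) * (c * u / 2) ^ k)"
proof -
  have u0: "u \<noteq> 0" using u by auto
  have "(deriv ^^ m) (\<lambda>v. legendreP n (v - c) * Ln v) u =
      (\<Sum>k\<le>n. (-c) ^ (n + k) * legendre_coeff n k / 2 ^ k *
        ((-1) ^ (m - k - 1) * fact k * fact (m - k - 1) * inverse u ^ (m - k)))"
    unfolding legendreP_shift_expansion[OF c] by (rule higher_deriv_poly_mult_Ln[OF nm u])
  also have "\<dots> = (-c) ^ n * (-1) ^ (m + 1) * inverse u ^ m *
      (\<Sum>k\<le>n. legendre_coeff n k * fact k * fact (m - k - 1) * (c * u / 2) ^ k)"
    unfolding sum_distrib_left
  proof (rule sum.cong)
    fix k assume "k \<in> {..n}"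
    then have "k < m" using nm by simp
    then obtain j where m: "m = k + Suc j" by (auto simp: less_iff_Suc_add)
    show "(-c) ^ (n + k) * legendre_coeff n k / 2 ^ k *
        ((-1) ^ (m - k - 1) * fact k * fact (m - k - 1) * inverse u ^ (m - k)) =
      (-c) ^ n * (-1) ^ (m + 1) * inverse u ^ m *
        (legendre_coeff n k * fact k * fact (m - k - 1) * (c * u / 2) ^ k)"
      using u0 by (simp add: m power_add power_minus[of c] power_mult_distrib field_simps)
  qed simp
  finally show ?thesis .
qed

lemma powr_neg_half_mult_powr_half:
  fixes p q :: complex
  assumes "p \<noteq> 0" "q \<noteq> 0"
  shows "p powr (- (of_nat m / 2)) * q powr (- (of_nat m / 2)) *
      (p powr (of_nat m / 2) * q powr (- (of_nat m / 2))) = inverse q ^ m"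
proof -
  have "p powr (- (of_nat m / 2)) * p powr (of_nat m / 2) = 1"
    using assms(1) by (simp add: powr_minus)
  moreover have "q powr (- (of_nat m / 2)) * q powr (- (of_nat m / 2)) = q powr (- of_nat m)"
    by (simp flip: powr_add)
  moreover have "q powr (- of_nat m) = inverse q ^ m"
    using assms(2) by (simp add: powr_minus powr_nat' power_inverse)
  ultimately show ?thesis
    by (simp add: mult_ac)
qed

theorem mainTheorem6:
  fixes m n :: nat and eps :: int and z :: complex
  assumes "n < m"
    and "eps = 1 \<or> eps = -1"
    and "z \<notin> {w. Im w = 0 \<and> Re w \<le> 1}"
  shows "(deriv ^^ m) (\<lambda>w. legendreP n w * Ln (w + of_int eps)) z =
    (- of_int eps) ^ n * (-1) ^ (m + 1) * fact (n + m) * fact (m - n - 1) *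
    ((z - 1) powr (- (of_nat m / 2)) * (z + 1) powr (- (of_nat m / 2))) *
    assocP_neg n m eps z"
proof -
  define c :: complex where "c = of_int eps"
  have c: "c = 1 \<or> c = -1" using assms(2) by (auto simp: c_def)
  have z: "z - 1 \<noteq> 0" "z + 1 \<noteq> 0" using assms(3) by (auto simp: complex_eq_iff)
  have u: "z + c \<notin> \<real>\<^sub>\<le>\<^sub>0" using assms(3) c by (auto simp: complex_nonpos_Reals_iff)
  have prefactor: "(z - 1) powr (- (of_nat m / 2)) * (z + 1) powr (- (of_nat m / 2)) *
      (if eps = 1 then (z - 1) powr (of_nat m / 2) * (z + 1) powr (- (of_nat m / 2))
       else (z + 1) powr (of_nat m / 2) * (z - 1) powr (- (of_nat m / 2))) = inverse (z + c) ^ m"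
    using assms(2) powr_neg_half_mult_powr_half[OF z] powr_neg_half_mult_powr_half[OF z(2,1)]
    by (auto simp: c_def mult_ac)
  have argument: "1 - c * (z + c) / 2 = (1 - of_int eps * z) / 2"
    using c by (auto simp: c_def field_simps)
  have hypergeometric: "(\<Sum>k\<le>n. legendre_coeff n k * fact k * fact (m - k - 1) * (c * (z + c) / 2) ^ k) =
      fact (n + m) * fact (m - n - 1) / fact m *
      hyp2F1 (- of_nat n) (of_nat n + 1) (1 + of_nat m) ((1 - of_int eps * z) / 2)"
    unfolding sum_legendre_coeff_eq_hyp2F1[OF assms(1)] argument ..
  have "(deriv ^^ m) (\<lambda>w. legendreP n w * Ln (w + of_int eps)) z =
      (deriv ^^ m) (\<lambda>v. legendreP n (v - c) * Ln v) (z + c)"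
    using higher_deriv_shift[of m "\<lambda>v. legendreP n (v - c) * Ln v" c z] by (simp add: c_def)
  also have "\<dots> = (-c) ^ n * (-1) ^ (m + 1) * inverse (z + c) ^ m *
      (\<Sum>k\<le>n. legendre_coeff n k * fact k * fact (m - k - 1) * (c * (z + c) / 2) ^ k)"
    by (rule higher_deriv_legendreP_mult_Ln[OF assms(1) c u])
  finally show ?thesis
    unfolding assocP_neg_def hypergeometric prefactor[symmetric] by (simp add: c_def mult_ac)
qed

end
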